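(* Let $\gamma\in\mathbb{R}$ and $|a|$ small. The operator $\mathcal Q_a(\mu,\gamma)$ is not invertible in $L^2_0(\mathbb{T})$ for some $\mu\in\mathbb{C}$ if and only if $\mu$ belongs to the $L^2_0(\mathbb{T})$-spectrum of the operator $$\mathcal H_a(\gamma)=ck\partial_z+k^3\partial_z^3+6k\rho\,\partial_z(w\,\cdot)-\tfrac32\phi^2k\,\partial_z(w^2\,\cdot)-\frac{3\gamma^2}{k}\partial_z^{-1}-3i\phi\gamma\, w_z\,\partial_z^{-1}.$$
   Context: Here $\rho,\phi\in\mathbb{R}$, $k>0$, and $w$, $c$ describe the small-amplitude periodic traveling wave of the Konopelchenko–Dubrovsky equation: $w$ is smooth, real, even and $2\pi$-periodic, $w(z)=a\cos z+a^2(A_0+A_2\cos 2z)+a^3A_3\cos 3z+O(a^4)$, $c=k^2+a^2c_2+O(a^4)$, with $A_0=-\frac{3\rho}{2k^2}$, $A_2=\frac{\rho}{2k^2}$, $A_3=-\frac{\phi^2}{64k^2}+\frac{3\rho^2}{16k^4}$, $c_2=\frac{3\phi^2}{8}+\frac{15\rho^2}{2k^2}$. $L^2_0(\mathbb{T})$ is the space of $2\pi$-periodic square-integrable functions with zero mean, on which $\partial_z$ is invertible; $\mathcal H_a(\gamma)$ acts in $L^2_0(\mathbb{T})$ with domain $H^3(\mathbb{T})\cap L^2_0(\mathbb{T})$. The operator $\mathcal Q_a(\mu,\gamma)$ is $\mathcal Q_a(\mu,\gamma)\psi=k\big(\mu-kc\partial_z-k^3\partial_z^3-6k\rho\,\partial_z(w\,\cdot)+\tfrac32\phi^2k\,\partial_z(w^2\cdot)\big)\partial_z\psi+3\gamma^2\psi+3i\phi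 k\gamma w_z\psi$. *)

theory Defs
  imports "HOL-Analysis.Analysis"
begin

text \<open>
  Model of L^2_0(T) via the Fourier (Parseval) unitary isomorphism:
  a 2pi-periodic square integrable zero-mean function psi is represented by
  its Fourier coefficients  psi_hat : int => complex  with psi_hat 0 = 0.
  Under this isomorphism d/dz becomes multiplication by i n, and
  multiplication by a smooth periodic function g becomes convolution with
  the Fourier coefficients of g.
\<close>

definition L2_0 :: "(int \<Rightarrow> complex) set" where
  "L2_0 = {f. f 0 = 0 \<and> (\<lambda>n. (norm (f n))\<^sup>2) summable_on UNIV}"

definition l2norm :: "(int \<Rightarrow> complex) \<Rightarrow> real" where
  "l2norm f = sqrt (\<Sum>\<^sub>\<infinity>n. (norm (f n))\<^sup>2)"

definition Hs0 :: "nat \<Rightarrow> (int \<Rightarrow> complex) set" where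
  "Hs0 s = {f \<in> L2_0. (\<lambda>n. (real_of_int n) ^ (2 * s) * (norm (f n))\<^sup>2) summable_on UNIV}"

definition fcoef :: "(real \<Rightarrow> complex) \<Rightarrow> int \<Rightarrow> complex" where
  "fcoef g n = integral {0..2*pi} (\<lambda>z. g z * exp (- \<i> * of_int n * of_real z)) / of_real (2*pi)"

definition mult_op :: "(real \<Rightarrow> complex) \<Rightarrow> (int \<Rightarrow> complex) \<Rightarrow> (int \<Rightarrow> complex)" where
  "mult_op g f = (\<lambda>n. \<Sum>\<^sub>\<infinity>m. fcoef g (n - m) * f m)"

definition dz :: "(int \<Rightarrow> complex) \<Rightarrow> (int \<Rightarrow> complex)" where
  "dz f = (\<lambda>n. \<i> * of_int n * f n)"

definition dzinv :: "(int \<Rightarrow> complex) \<Rightarrow> (int \<Rightarrow> complex)" where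
  "dzinv f = (\<lambda>n. if n = 0 then 0 else f n / (\<i> * of_int n))"

definition P0 :: "(int \<Rightarrow> complex) \<Rightarrow> (int \<Rightarrow> complex)" where
  "P0 f = f(0 := 0)"

definition invertible_op :: "(int \<Rightarrow> complex) set \<Rightarrow> ((int \<Rightarrow> complex) \<Rightarrow> (int \<Rightarrow> complex)) \<Rightarrow> bool" where
  "invertible_op D T \<longleftrightarrow> bij_betw T D L2_0 \<and> (\<exists>C. \<forall>f\<in>D. l2norm f \<le> C * l2norm (T f))"

definition op_spectrum :: "(int \<Rightarrow> complex) set \<Rightarrow> ((int \<Rightarrow> complex) \<Rightarrow> (int \<Rightarrow> complex)) \<Rightarrow> complex set" where
  "op_spectrum D T = {\<mu>. \<not> invertible_op D (\<lambda>f n. \<mu> * f n - T f n)}"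

definition Hop :: "real \<Rightarrow> real \<Rightarrow> real \<Rightarrow> (real \<Rightarrow> real) \<Rightarrow> real \<Rightarrow> real
                   \<Rightarrow> (int \<Rightarrow> complex) \<Rightarrow> (int \<Rightarrow> complex)" where
  "Hop k \<rho> \<phi> w c \<gamma> f = P0 (\<lambda>n.
       of_real (c * k) * dz f n
     + of_real (k ^ 3) * dz (dz (dz f)) n
     + of_real (6 * k * \<rho>) * dz (mult_op (\<lambda>z. of_real (w z)) f) n
     - of_real (3 / 2 * \<phi>\<^sup>2 * k) * dz (mult_op (\<lambda>z. of_real ((w z)\<^sup>2)) f) n
     - of_real (3 * \<gamma>\<^sup>2 / k) * dzinv f n
     - 3 * \<i> * of_real (\<phi> * \<gamma>) * mult_op (\<lambda>z. of_real (deriv w z)) (dzinv f) n)"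

definition Qop :: "real \<Rightarrow> real \<Rightarrow> real \<Rightarrow> (real \<Rightarrow> real) \<Rightarrow> real \<Rightarrow> complex \<Rightarrow> real
                   \<Rightarrow> (int \<Rightarrow> complex) \<Rightarrow> (int \<Rightarrow> complex)" where
  "Qop k \<rho> \<phi> w c \<mu> \<gamma> f = P0 (\<lambda>n.
       of_real k * (\<mu> * dz f n
         - of_real (k * c) * dz (dz f) n
         - of_real (k ^ 3) * dz (dz (dz (dz f))) n
         - of_real (6 * k * \<rho>) * dz (mult_op (\<lambda>z. of_real (w z)) (dz f)) n
         + of_real (3 / 2 * \<phi>\<^sup>2 * k) * dz (mult_op (\<lambda>z. of_real ((w z)\<^sup>2)) (dz f)) n)
     + of_real (3 * \<gamma>\<^sup>2) * f n
     + 3 * \<i> * of_real (\<phi> * k * \<gamma>) * mult_op (\<lambda>z. of_real (deriv w z)) f n)"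

end

theory Submission
  imports Defs
begin

(* On zero-mean sequences Q_a(mu, gamma) = k (mu - H_a(gamma)) dz, and dz maps H^4 onto H^3
   bijectively, so Q_a(mu, gamma) is bijective exactly when mu - H_a(gamma) is.  A bounded inverse
   passes from mu - H to Q since ||g|| <= ||dz g||.  Conversely, invertibility of Q only bounds
   ||dz^-1 f|| by ||(mu - H) f||; the bound on f itself is an elliptic estimate: at high
   frequencies n the dispersion symbol k^3 n^3 dominates mu and the remaining terms of H, which
   are of order at most one and act boundedly from l^1 to l^infinity because the Fourier
   coefficients of w, w^2 and w_z are bounded. *)

definition l1norm :: "(int \<Rightarrow> complex) \<Rightarrow> real" where
  "l1norm f = (\<Sum>\<^sub>\<infinity>n. norm (f n))"

lemma summable_on_inverse_power2_int: "(\<lambda>n::int. 1 / (real_of_int n)\<^sup>2) summable_on UNIV"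
proof -
  have nat: "(\<lambda>n::nat. 1 / (real n)\<^sup>2) summable_on UNIV"
  proof (rule norm_summable_imp_summable_on)
    have "summable (\<lambda>n::nat. inverse (real n ^ 2))" by (rule inverse_power_summable) auto
    then show "summable (\<lambda>n::nat. norm (1 / (real n)\<^sup>2))" by (simp add: field_simps)
  qed
  have UNIV_int: "(UNIV :: int set) = range int \<union> range (\<lambda>n. - int n)"
    by (auto intro: int_cases2)
  have "(\<lambda>n::int. 1 / (real_of_int n)\<^sup>2) summable_on range int"
    by (subst summable_on_reindex) (auto simp: o_def nat)
  moreover have "(\<lambda>n::int. 1 / (real_of_int n)\<^sup>2) summable_on range (\<lambda>n. - int n)"
    by (subst summable_on_reindex) (auto simp: o_def nat inj_on_def)
  ultimately show ?thesis unfolding UNIV_int by (rule summable_on_union)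
qed

lemma le_infsum_single:
  fixes g :: "'a \<Rightarrow> real"
  assumes "g summable_on UNIV" "\<And>n. g n \<ge> 0"
  shows "g n \<le> infsum g UNIV"
  using finite_sum_le_infsum[of g UNIV "{n}"] assms by simp

lemma infsum_split_finite:
  fixes g :: "'a \<Rightarrow> real"
  assumes "g summable_on UNIV" "finite I"
  shows "infsum g UNIV = sum g I + infsum g (- I)"
proof -
  have "infsum g (I \<union> - I) = infsum g I + infsum g (- I)"
    by (rule infsum_Un_disjoint) (use assms summable_on_subset in auto)
  then show ?thesis using assms(2) by simp
qed

lemma summable_int_small_tail:
  fixes h :: "int \<Rightarrow> real"
  assumes h: "h summable_on UNIV" "\<And>n. h n \<ge> 0" and \<epsilon>: "\<epsilon> > 0"
  shows "\<exists>I. finite I \<and> infsum h (- I) \<le> \<epsilon> \<and> (\<forall>n. n \<notin> I \<longrightarrow> L \<le> \<bar>real_of_int n\<bar>)"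
proof -
  obtain F where F: "finite F" "dist (sum h F) (infsum h UNIV) \<le> \<epsilon>"
    using infsum_finite_approximation[OF h(1) \<epsilon>] by blast
  define M where "M = max (\<Sum>n\<in>F. nat \<bar>n\<bar>) (nat \<lceil>L\<rceil>)"
  define I where "I = {- int M..int M}"
  have "nat \<bar>n\<bar> \<le> M" if "n \<in> F" for n
    using member_le_sum[of n F "\<lambda>n. nat \<bar>n\<bar>"] that F(1) unfolding M_def by simp
  then have "F \<subseteq> I" unfolding I_def by force
  then have "sum h F \<le> sum h I"
    unfolding I_def by (rule sum_mono2[OF finite_atLeastAtMost_int]) (use h(2) in auto)
  moreover have "infsum h UNIV - sum h F \<le> \<epsilon>" using F(2) by (simp add: dist_real_def)
  ultimately have "infsum h (- I) \<le> \<epsilon>"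
    using infsum_split_finite[OF h(1), of I] unfolding I_def by simp
  moreover have "L \<le> \<bar>real_of_int n\<bar>" if "n \<notin> I" for n
  proof -
    have "real M < \<bar>real_of_int n\<bar>" using that unfolding I_def by auto
    then show ?thesis unfolding M_def by linarith
  qed
  ultimately show ?thesis unfolding I_def by blast
qed

lemma norm_le_l2norm:
  assumes "(\<lambda>n. (norm (x n))\<^sup>2) summable_on UNIV"
  shows "norm (x n) \<le> l2norm x"
  unfolding l2norm_def using le_infsum_single[OF assms] by (simp add: real_le_rsqrt)

lemma l2norm_le_l1norm:
  assumes l2: "(\<lambda>n. (norm (x n))\<^sup>2) summable_on UNIV"
    and l1: "(\<lambda>n. norm (x n)) summable_on UNIV"
  shows "l2norm x \<le> l1norm x"
proof -
  let ?S = "l1norm x"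
  have "(\<Sum>\<^sub>\<infinity>n. (norm (x n))\<^sup>2) \<le> (\<Sum>\<^sub>\<infinity>n. ?S * norm (x n))"
  proof (rule infsum_mono[OF l2 summable_on_cmult_right[OF l1]])
    fix n
    have "norm (x n) \<le> ?S" unfolding l1norm_def by (rule le_infsum_single[OF l1]) simp
    then show "(norm (x n))\<^sup>2 \<le> ?S * norm (x n)" by (simp add: power2_eq_square mult_right_mono)
  qed
  also have "\<dots> = ?S\<^sup>2" unfolding l1norm_def infsum_cmult_right' by (simp add: power2_eq_square)
  finally have "l2norm x \<le> sqrt (?S\<^sup>2)" unfolding l2norm_def by (rule real_sqrt_le_mono)
  moreover have "?S \<ge> 0" unfolding l1norm_def by (simp add: infsum_nonneg)
  ultimately show ?thesis by simp
qed

lemma l2norm_scale: "l2norm (\<lambda>n. complex_of_real r * x n) = \<bar>r\<bar> * l2norm x"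
proof -
  have "(\<Sum>\<^sub>\<infinity>n. (norm (complex_of_real r * x n))\<^sup>2) = r\<^sup>2 * (\<Sum>\<^sub>\<infinity>n. (norm (x n))\<^sup>2)"
    by (simp add: norm_mult power_mult_distrib infsum_cmult_right')
  then show ?thesis unfolding l2norm_def by (simp add: real_sqrt_mult)
qed

lemma L2_0_scale: "h \<in> L2_0 \<Longrightarrow> (\<lambda>n. complex_of_real r * h n) \<in> L2_0"
  using summable_on_cmult_right[of "\<lambda>n. (norm (h n))\<^sup>2" UNIV "r\<^sup>2"]
  by (simp add: L2_0_def norm_mult power_mult_distrib)

lemma bij_betw_scale_L2_0:
  assumes "r \<noteq> 0"
  shows "bij_betw (\<lambda>h n. complex_of_real r * h n) L2_0 L2_0"
proof (rule bij_betw_byWitness[where f' = "\<lambda>h n. complex_of_real (1 / r) * h n"])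
  show "(\<lambda>h n. complex_of_real r * h n) ` L2_0 \<subseteq> L2_0"
    and "(\<lambda>h n. complex_of_real (1 / r) * h n) ` L2_0 \<subseteq> L2_0"
    using L2_0_scale by blast+
qed (use assms in \<open>simp_all add: fun_eq_iff\<close>)

lemma one_le_of_int_power2: "n \<noteq> 0 \<Longrightarrow> 1 \<le> (real_of_int n)\<^sup>2"
  by (smt (verit) of_int_1_le_iff of_int_power power2_less_eq_zero_iff)

lemma of_int_power2_le_even_power:
  "1 \<le> s \<Longrightarrow> (real_of_int n)\<^sup>2 \<le> (real_of_int n) ^ (2 * s)"
  by (smt (verit) mult_2 nat_1_add_1 of_int_power of_int_power_le_of_int_cancel_iff
      power_increasing power_mult zero_le_even_power')

lemma norm_dz: "norm (dz f n) = \<bar>real_of_int n\<bar> * norm (f n)"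
  by (simp add: dz_def norm_mult)

lemma norm_dzinv_le: "norm (dzinv f n) \<le> norm (f n)"
proof (cases "n = 0")
  case False
  then have "1 \<le> \<bar>real_of_int n\<bar>" by linarith
  then have "norm (f n) \<le> \<bar>real_of_int n\<bar> * norm (f n)"
    using mult_right_mono[of 1 _ "norm (f n)"] by simp
  then show ?thesis
    using False by (simp add: dzinv_def norm_divide norm_mult divide_le_eq mult.commute)
qed (simp add: dzinv_def)

lemma dzinv_dz: "g 0 = 0 \<Longrightarrow> dzinv (dz g) = g"
  by (auto simp: dzinv_def dz_def fun_eq_iff)

lemma dz_dzinv: "f 0 = 0 \<Longrightarrow> dz (dzinv f) = f"
  by (auto simp: dzinv_def dz_def fun_eq_iff)

lemma Hs0_zero: "f \<in> Hs0 s \<Longrightarrow> f 0 = 0"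
  by (simp add: Hs0_def L2_0_def)

lemma Hs0_summable_norm2: "f \<in> Hs0 s \<Longrightarrow> (\<lambda>n. (norm (f n))\<^sup>2) summable_on UNIV"
  by (simp add: Hs0_def L2_0_def)

lemma Hs0_summable_weighted:
  "f \<in> Hs0 s \<Longrightarrow> (\<lambda>n. (real_of_int n) ^ (2 * s) * (norm (f n))\<^sup>2) summable_on UNIV"
  by (simp add: Hs0_def)

lemma dz_in_Hs0:
  assumes g: "g \<in> Hs0 (Suc s)"
  shows "dz g \<in> Hs0 s"
proof -
  have norm2: "(norm (dz g n))\<^sup>2 = (real_of_int n)\<^sup>2 * (norm (g n))\<^sup>2" for n
    by (simp add: norm_dz power_mult_distrib)
  have weighted: "(\<lambda>n. (real_of_int n) ^ (2 * Suc s) * (norm (g n))\<^sup>2) summable_on UNIV"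
    by (rule Hs0_summable_weighted[OF g])
  have "(\<lambda>n. (norm (dz g n))\<^sup>2) summable_on UNIV"
  proof (rule summable_on_comparison_test[OF weighted])
    fix n
    show "(norm (dz g n))\<^sup>2 \<le> (real_of_int n) ^ (2 * Suc s) * (norm (g n))\<^sup>2"
      unfolding norm2
      using mult_right_mono[OF of_int_power2_le_even_power[of "Suc s" n], of "(norm (g n))\<^sup>2"]
      by simp
  qed simp
  moreover have "(\<lambda>n. (real_of_int n) ^ (2 * s) * (norm (dz g n))\<^sup>2) summable_on UNIV"
    using weighted by (simp add: norm2 power_add[symmetric] mult.assoc[symmetric])
  ultimately show ?thesis using Hs0_zero[OF g] by (simp add: Hs0_def L2_0_def dz_def)
qed

lemma dzinv_in_Hs0:
  assumes f: "f \<in> Hs0 s"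
  shows "dzinv f \<in> Hs0 (Suc s)"
proof -
  have norm2: "(norm (f n))\<^sup>2 = (real_of_int n)\<^sup>2 * (norm (dzinv f n))\<^sup>2" for n
    using Hs0_zero[OF f] by (cases "n = 0") (auto simp: dzinv_def norm_divide norm_mult power_divide)
  have "(\<lambda>n. (norm (dzinv f n))\<^sup>2) summable_on UNIV"
    by (rule summable_on_comparison_test[OF Hs0_summable_norm2[OF f]])
      (simp add: norm_dzinv_le power_mono)+
  moreover have "(\<lambda>n. (real_of_int n) ^ (2 * Suc s) * (norm (dzinv f n))\<^sup>2) summable_on UNIV"
    using Hs0_summable_weighted[OF f]
    by (simp add: norm2 power_add[symmetric] mult.assoc[symmetric])
  ultimately show ?thesis by (simp add: Hs0_def L2_0_def dzinv_def)
qed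

lemma bij_betw_dz: "bij_betw dz (Hs0 (Suc s)) (Hs0 s)"
  by (rule bij_betw_byWitness[where f' = dzinv])
    (use dzinv_dz dz_dzinv Hs0_zero dz_in_Hs0 dzinv_in_Hs0 in blast)+

lemma l2norm_le_l2norm_dz:
  assumes g: "g \<in> Hs0 (Suc s)"
  shows "l2norm g \<le> l2norm (dz g)"
  unfolding l2norm_def
proof (rule real_sqrt_le_mono, rule infsum_mono)
  show "(\<lambda>n. (norm (g n))\<^sup>2) summable_on UNIV" "(\<lambda>n. (norm (dz g n))\<^sup>2) summable_on UNIV"
    using Hs0_summable_norm2 g dz_in_Hs0 by blast+
  fix n
  show "(norm (g n))\<^sup>2 \<le> (norm (dz g n))\<^sup>2"
    using Hs0_zero[OF g] mult_right_mono[OF one_le_of_int_power2[of n], of "(norm (g n))\<^sup>2"]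
    by (cases "n = 0") (auto simp: norm_dz power_mult_distrib)
qed

(* AM-GM: norm (f n) <= n^2 norm (f n)^2 + 1 / n^2, and 1 / n^2 is summable. *)
lemma Hs0_summable_norm:
  assumes s: "1 \<le> s" and f: "f \<in> Hs0 s"
  shows "(\<lambda>n. norm (f n)) summable_on UNIV"
proof (rule summable_on_comparison_test)
  show "(\<lambda>n. (real_of_int n) ^ (2 * s) * (norm (f n))\<^sup>2 + 1 / (real_of_int n)\<^sup>2) summable_on UNIV"
    by (rule summable_on_add[OF Hs0_summable_weighted[OF f] summable_on_inverse_power2_int])
  fix n
  show "norm (f n) \<le> (real_of_int n) ^ (2 * s) * (norm (f n))\<^sup>2 + 1 / (real_of_int n)\<^sup>2"
  proof (cases "n = 0")
    case False
    have "2 * norm (f n) \<le> (real_of_int n)\<^sup>2 * (norm (f n))\<^sup>2 + 1 / (real_of_int n)\<^sup>2"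
      using sum_squares_bound[of "\<bar>real_of_int n\<bar> * norm (f n)" "1 / \<bar>real_of_int n\<bar>"] False
      by (simp add: power_mult_distrib power_divide)
    then have "norm (f n) \<le> (real_of_int n)\<^sup>2 * (norm (f n))\<^sup>2 + 1 / (real_of_int n)\<^sup>2"
      using norm_ge_zero[of "f n"] by linarith
    also have "\<dots> \<le> (real_of_int n) ^ (2 * s) * (norm (f n))\<^sup>2 + 1 / (real_of_int n)\<^sup>2"
      by (simp add: mult_right_mono of_int_power2_le_even_power[OF s])
    finally show ?thesis by simp
  qed (simp add: Hs0_zero[OF f])
qed simp

section \<open>The lower-order part of H\<close>

lemma fcoef_bounded:
  assumes "continuous_on {0..2*pi} g"
  shows "\<exists>G\<ge>0. \<forall>j. norm (fcoef g j) \<le> G"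
proof -
  obtain B where B: "\<And>z. z \<in> {0..2*pi} \<Longrightarrow> norm (g z) \<le> B"
    using compact_imp_bounded[OF compact_continuous_image[OF assms compact_Icc]]
    unfolding bounded_iff by blast
  have "(0::real) \<in> {0..2*pi}" by simp
  then have B0: "B \<ge> 0" using B norm_ge_zero order_trans by blast
  have "norm (fcoef g j) \<le> B" for j
  proof -
    let ?h = "\<lambda>z. g z * exp (- \<i> * of_int j * of_real z)"
    have "continuous_on {0..2*pi} ?h"
      by (intro continuous_on_mult assms continuous_on_exp continuous_on_of_real
          continuous_on_mult_left continuous_on_id)
    then have integral: "(?h has_integral integral {0..2*pi} ?h) {0..2*pi}"
      by (rule integrable_integral[OF integrable_continuous_interval])
    have bound: "norm (?h z) \<le> B" if "z \<in> {0..2*pi} - {}" for z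
      using B[of z] that by (simp add: norm_mult)
    have "norm (integral {0..2*pi} ?h) \<le> B * (2*pi)"
      using has_integral_bound_real[OF B0 finite.emptyI integral bound] by simp
    then show ?thesis unfolding fcoef_def by (simp add: norm_divide divide_le_eq mult.commute)
  qed
  then show ?thesis using B0 by blast
qed

lemma norm_mult_op_le:
  assumes G: "\<And>j. norm (fcoef g j) \<le> G" and G0: "G \<ge> 0"
    and x: "(\<lambda>m. norm (x m)) summable_on UNIV"
  shows "norm (mult_op g x n) \<le> G * l1norm x"
proof -
  have bound: "norm (fcoef g (n - m) * x m) \<le> G * norm (x m)" for m
    using G[of "n - m"] by (simp add: norm_mult mult_right_mono)
  have Gx: "(\<lambda>m. G * norm (x m)) summable_on UNIV" by (rule summable_on_cmult_right[OF x])
  have summable: "(\<lambda>m. norm (fcoef g (n - m) * x m)) summable_on UNIV"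
    by (rule summable_on_comparison_test[OF Gx]) (use bound in auto)
  have "norm (mult_op g x n) \<le> (\<Sum>\<^sub>\<infinity>m. norm (fcoef g (n - m) * x m))"
    unfolding mult_op_def by (rule norm_infsum_bound[OF summable])
  also have "\<dots> \<le> (\<Sum>\<^sub>\<infinity>m. G * norm (x m))" by (rule infsum_mono[OF summable Gx bound])
  also have "\<dots> = G * l1norm x" unfolding l1norm_def by (rule infsum_cmult_right')
  finally show ?thesis .
qed

definition Hop_lower_order :: "real \<Rightarrow> real \<Rightarrow> real \<Rightarrow> (real \<Rightarrow> real) \<Rightarrow> real
    \<Rightarrow> (int \<Rightarrow> complex) \<Rightarrow> int \<Rightarrow> complex" where
  "Hop_lower_order k \<rho> \<phi> w \<gamma> f n =
       of_real (6 * k * \<rho>) * dz (mult_op (\<lambda>z. of_real (w z)) f) n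
     - of_real (3 / 2 * \<phi>\<^sup>2 * k) * dz (mult_op (\<lambda>z. of_real ((w z)\<^sup>2)) f) n
     - of_real (3 * \<gamma>\<^sup>2 / k) * dzinv f n
     - 3 * \<i> * of_real (\<phi> * \<gamma>) * mult_op (\<lambda>z. of_real (deriv w z)) (dzinv f) n"

lemma Hop_eq_dispersion_plus_lower_order:
  assumes "n \<noteq> 0"
  shows "Hop k \<rho> \<phi> w c \<gamma> f n
    = \<i> * of_real (c * k * of_int n - k ^ 3 * (of_int n) ^ 3) * f n + Hop_lower_order k \<rho> \<phi> w \<gamma> f n"
  using assms unfolding Hop_def P0_def Hop_lower_order_def dz_def
  by (simp add: algebra_simps power3_eq_cube)

lemma norm_Hop_lower_order_le:
  assumes G0: "\<And>j. norm (fcoef (\<lambda>z. complex_of_real (w z)) j) \<le> G0" "G0 \<ge> 0"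
    and G1: "\<And>j. norm (fcoef (\<lambda>z. complex_of_real ((w z)\<^sup>2)) j) \<le> G1" "G1 \<ge> 0"
    and G2: "\<And>j. norm (fcoef (\<lambda>z. complex_of_real (deriv w z)) j) \<le> G2" "G2 \<ge> 0"
    and f: "(\<lambda>m. norm (f m)) summable_on UNIV" and n: "n \<noteq> 0"
  shows "norm (Hop_lower_order k \<rho> \<phi> w \<gamma> f n) \<le> \<bar>real_of_int n\<bar> *
    ((\<bar>6 * k * \<rho>\<bar> * G0 + \<bar>3 / 2 * \<phi>\<^sup>2 * k\<bar> * G1 + \<bar>3 * \<gamma>\<^sup>2 / k\<bar>
      + 3 * \<bar>\<phi> * \<gamma>\<bar> * G2) * l1norm f)"
    (is "_ \<le> ?r * (?A * ?S)")
proof -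
  have r: "1 \<le> ?r" using n by linarith
  have S: "0 \<le> ?S" unfolding l1norm_def by (simp add: infsum_nonneg)
  have f': "(\<lambda>m. norm (dzinv f m)) summable_on UNIV"
    by (rule summable_on_comparison_test[OF f]) (simp_all add: norm_dzinv_le)
  have "l1norm (dzinv f) \<le> ?S"
    unfolding l1norm_def by (rule infsum_mono[OF f' f norm_dzinv_le])
  then have "norm (mult_op (\<lambda>z. complex_of_real (deriv w z)) (dzinv f) n) \<le> G2 * ?S"
    using norm_mult_op_le[OF G2 f', of n] mult_left_mono[of _ _ G2] G2(2) by fastforce
  then have t3: "norm (mult_op (\<lambda>z. complex_of_real (deriv w z)) (dzinv f) n) \<le> ?r * (G2 * ?S)"
    using mult_right_mono[OF r, of "G2 * ?S"] G2(2) S by simp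
  have t0: "norm (dz (mult_op (\<lambda>z. complex_of_real (w z)) f) n) \<le> ?r * (G0 * ?S)"
    unfolding norm_dz by (rule mult_left_mono[OF norm_mult_op_le[OF G0 f]]) simp
  have t1: "norm (dz (mult_op (\<lambda>z. complex_of_real ((w z)\<^sup>2)) f) n) \<le> ?r * (G1 * ?S)"
    unfolding norm_dz by (rule mult_left_mono[OF norm_mult_op_le[OF G1 f]]) simp
  have t2: "norm (dzinv f n) \<le> ?r * ?S"
    using norm_dzinv_le[of f n] le_infsum_single[OF f, of n] mult_right_mono[OF r S]
    unfolding l1norm_def by simp
  have triangle: "norm (a - b - c - d) \<le> norm a + norm b + norm c + norm d" for a b c d :: complex
    by (smt (verit) norm_triangle_ineq4)
  have norm_of_real_mult: "norm (complex_of_real a * x) = \<bar>a\<bar> * norm x" for a x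
    by (simp add: norm_mult)
  have norm_3i_mult: "norm (3 * \<i> * complex_of_real a * x) = 3 * \<bar>a\<bar> * norm x" for a x
    by (simp add: norm_mult)
  have "norm (Hop_lower_order k \<rho> \<phi> w \<gamma> f n)
      \<le> \<bar>6 * k * \<rho>\<bar> * norm (dz (mult_op (\<lambda>z. complex_of_real (w z)) f) n)
        + \<bar>3 / 2 * \<phi>\<^sup>2 * k\<bar> * norm (dz (mult_op (\<lambda>z. complex_of_real ((w z)\<^sup>2)) f) n)
        + \<bar>3 * \<gamma>\<^sup>2 / k\<bar> * norm (dzinv f n)
        + 3 * \<bar>\<phi> * \<gamma>\<bar> * norm (mult_op (\<lambda>z. complex_of_real (deriv w z)) (dzinv f) n)"
    unfolding Hop_lower_order_def norm_of_real_mult[symmetric] norm_3i_mult[symmetric]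
    by (rule triangle)
  also have "\<dots> \<le> \<bar>6 * k * \<rho>\<bar> * (?r * (G0 * ?S)) + \<bar>3 / 2 * \<phi>\<^sup>2 * k\<bar> * (?r * (G1 * ?S))
        + \<bar>3 * \<gamma>\<^sup>2 / k\<bar> * (?r * ?S) + 3 * \<bar>\<phi> * \<gamma>\<bar> * (?r * (G2 * ?S))"
    by (intro add_mono mult_left_mono t0 t1 t2 t3) auto
  also have "\<dots> = ?r * (?A * ?S)" by (simp add: algebra_simps)
  finally show ?thesis .
qed

lemma Hop_lower_order_bound:
  assumes "continuous_on {0..2*pi} w" "continuous_on {0..2*pi} (deriv w)"
  shows "\<exists>A\<ge>0. \<forall>f n. (\<lambda>m. norm (f m)) summable_on UNIV \<longrightarrow> n \<noteq> 0 \<longrightarrow>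
           norm (Hop_lower_order k \<rho> \<phi> w \<gamma> f n) \<le> \<bar>real_of_int n\<bar> * (A * l1norm f)"
proof -
  have "continuous_on {0..2*pi} (\<lambda>z. complex_of_real (w z))"
    and "continuous_on {0..2*pi} (\<lambda>z. complex_of_real ((w z)\<^sup>2))"
    and "continuous_on {0..2*pi} (\<lambda>z. complex_of_real (deriv w z))"
    by (intro continuous_on_of_real continuous_on_power assms)+
  then obtain G0 G1 G2 where G:
    "\<And>j. norm (fcoef (\<lambda>z. complex_of_real (w z)) j) \<le> G0" "G0 \<ge> 0"
    "\<And>j. norm (fcoef (\<lambda>z. complex_of_real ((w z)\<^sup>2)) j) \<le> G1" "G1 \<ge> 0"
    "\<And>j. norm (fcoef (\<lambda>z. complex_of_real (deriv w z)) j) \<le> G2" "G2 \<ge> 0"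
    using fcoef_bounded by (metis (no_types, lifting))
  show ?thesis
    by (intro exI[of _ "\<bar>6 * k * \<rho>\<bar> * G0 + \<bar>3 / 2 * \<phi>\<^sup>2 * k\<bar> * G1 + \<bar>3 * \<gamma>\<^sup>2 / k\<bar>
        + 3 * \<bar>\<phi> * \<gamma>\<bar> * G2"]
        conjI allI impI norm_Hop_lower_order_le)
      (use G in simp_all)
qed

section \<open>Elliptic estimate\<close>

lemma dispersion_dominates:
  fixes \<mu> :: complex and k c x :: real
  assumes k: "k > 0" and x: "1 \<le> \<bar>x\<bar>" and large: "2 * (\<bar>c\<bar> + norm \<mu> / k) \<le> k\<^sup>2 * \<bar>x\<bar>"
  shows "k ^ 3 * \<bar>x\<bar> ^ 3 / 2 \<le> norm (\<mu> - \<i> * of_real (c * k * x - k ^ 3 * x ^ 3))"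
proof -
  let ?r = "\<bar>x\<bar>"
  have "?r \<le> ?r\<^sup>2"
    using mult_right_mono[OF x abs_ge_zero[of x]] by (simp add: power2_eq_square)
  then have "k\<^sup>2 * ?r \<le> k\<^sup>2 * ?r\<^sup>2"
    by (simp add: mult_left_mono)
  then have "k\<^sup>2 * ?r\<^sup>2 / 2 + norm \<mu> / k \<le> \<bar>c - k\<^sup>2 * x\<^sup>2\<bar>"
    using large by simp
  then have "k * ?r * (k\<^sup>2 * ?r\<^sup>2 / 2 + norm \<mu> / k) \<le> k * ?r * \<bar>c - k\<^sup>2 * x\<^sup>2\<bar>"
    using k by (intro mult_left_mono) simp_all
  moreover have "k * ?r * (k\<^sup>2 * ?r\<^sup>2 / 2 + norm \<mu> / k) = k ^ 3 * ?r ^ 3 / 2 + ?r * norm \<mu>"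
    using k by (simp add: field_simps power2_eq_square power3_eq_cube)
  moreover have "c * k * x - k ^ 3 * x ^ 3 = (k * x) * (c - k\<^sup>2 * x\<^sup>2)"
    by (simp add: algebra_simps power2_eq_square power3_eq_cube)
  then have "k * ?r * \<bar>c - k\<^sup>2 * x\<^sup>2\<bar> = \<bar>c * k * x - k ^ 3 * x ^ 3\<bar>"
    using k by (simp add: abs_mult)
  moreover have "norm \<mu> \<le> ?r * norm \<mu>"
    using mult_right_mono[OF x norm_ge_zero[of \<mu>]] by simp
  moreover have "\<bar>X\<bar> - norm \<mu> \<le> norm (\<mu> - \<i> * of_real X)" for X :: real
    using norm_triangle_ineq2[of "\<i> * of_real X" \<mu>] by (simp add: norm_mult norm_minus_commute)
  ultimately show ?thesis by (smt (verit))
qed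

lemma Hop_high_frequency_bound:
  fixes \<mu> :: complex
  assumes k: "k > 0" and n: "1 \<le> \<bar>real_of_int n\<bar>"
    and large: "2 * (\<bar>c\<bar> + norm \<mu> / k) \<le> k\<^sup>2 * \<bar>real_of_int n\<bar>"
    and lower: "norm (Hop_lower_order k \<rho> \<phi> w \<gamma> f n) \<le> \<bar>real_of_int n\<bar> * B"
  shows "norm (f n) \<le> (norm (\<mu> * f n - Hop k \<rho> \<phi> w c \<gamma> f n) + B) * (2 / (k ^ 3 * (real_of_int n)\<^sup>2))"
proof -
  let ?r = "\<bar>real_of_int n\<bar>" and ?T = "\<mu> * f n - Hop k \<rho> \<phi> w c \<gamma> f n"
  let ?X = "c * k * of_int n - k ^ 3 * (of_int n) ^ 3"
  have "n \<noteq> 0" using n by auto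
  then have "(\<mu> - \<i> * of_real ?X) * f n = ?T + Hop_lower_order k \<rho> \<phi> w \<gamma> f n"
    by (simp add: Hop_eq_dispersion_plus_lower_order algebra_simps)
  then have "norm (\<mu> - \<i> * of_real ?X) * norm (f n) \<le> norm ?T + ?r * B"
    using norm_triangle_ineq[of ?T] lower by (metis norm_mult order_trans add_left_mono)
  moreover have "k ^ 3 * ?r ^ 3 / 2 * norm (f n) \<le> norm (\<mu> - \<i> * of_real ?X) * norm (f n)"
    using dispersion_dominates[OF k n large] by (intro mult_right_mono) simp_all
  moreover have "norm ?T \<le> ?r * norm ?T"
    using mult_right_mono[OF n norm_ge_zero[of ?T]] by simp
  ultimately have "k ^ 3 * ?r ^ 3 / 2 * norm (f n) \<le> ?r * (norm ?T + B)"
    by (simp add: distrib_left)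
  moreover have "0 < k ^ 3 * ?r ^ 3 / 2" using k n by simp
  ultimately have "norm (f n) \<le> ?r * (norm ?T + B) / (k ^ 3 * ?r ^ 3 / 2)"
    by (simp add: le_divide_eq mult.commute)
  also have "\<dots> = (norm ?T + B) * (2 / (k ^ 3 * (real_of_int n)\<^sup>2))"
    using k n by (simp add: field_simps power2_eq_square power3_eq_cube)
  finally show ?thesis .
qed

lemma l1norm_absorb:
  fixes x :: "int \<Rightarrow> complex" and h :: "int \<Rightarrow> real"
  assumes x: "(\<lambda>n. norm (x n)) summable_on UNIV" and I: "finite I"
    and h: "h summable_on (- I)" and h0: "\<And>n. h n \<ge> 0"
    and low: "\<And>n. n \<in> I \<Longrightarrow> norm (x n) \<le> a n"
    and high: "\<And>n. n \<notin> I \<Longrightarrow> norm (x n) \<le> (\<tau> + A * l1norm x) * h n"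
    and small: "A * infsum h (- I) \<le> 1 / 2"
  shows "l1norm x \<le> 2 * sum a I + 2 * infsum h (- I) * \<tau>"
proof -
  let ?S = "l1norm x" and ?E = "infsum h (- I)"
  have "?S = (\<Sum>n\<in>I. norm (x n)) + (\<Sum>\<^sub>\<infinity>n\<in>- I. norm (x n))"
    unfolding l1norm_def by (rule infsum_split_finite[OF x I])
  also have "\<dots> \<le> sum a I + (\<Sum>\<^sub>\<infinity>n\<in>- I. (\<tau> + A * ?S) * h n)"
  proof (rule add_mono[OF sum_mono[OF low] infsum_mono])
    show "(\<lambda>n. norm (x n)) summable_on - I" using x summable_on_subset by blast
    show "(\<lambda>n. (\<tau> + A * ?S) * h n) summable_on - I" by (rule summable_on_cmult_right[OF h])
  qed (use high in auto)
  also have "\<dots> = sum a I + \<tau> * ?E + ?S * (A * ?E)"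
    by (simp only: infsum_cmult_right') (simp add: algebra_simps)
  also have "\<dots> \<le> sum a I + \<tau> * ?E + ?S * (1 / 2)"
    using small by (intro add_left_mono mult_left_mono) (simp_all add: l1norm_def infsum_nonneg)
  finally show ?thesis by (simp add: algebra_simps)
qed

lemma Hop_l2norm_le_cutoff:
  fixes \<mu> :: complex
  assumes k: "k > 0" and s: "1 \<le> s" and f: "f \<in> Hs0 s"
    and T: "T = (\<lambda>n. \<mu> * f n - Hop k \<rho> \<phi> w c \<gamma> f n)" "T \<in> L2_0"
    and lower: "\<And>n. n \<noteq> 0 \<Longrightarrow>
      norm (Hop_lower_order k \<rho> \<phi> w \<gamma> f n) \<le> \<bar>real_of_int n\<bar> * (A * l1norm f)"
    and I: "finite I"
    and large: "\<And>n. n \<notin> I \<Longrightarrow>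
      1 \<le> \<bar>real_of_int n\<bar> \<and> 2 * (\<bar>c\<bar> + norm \<mu> / k) \<le> k\<^sup>2 * \<bar>real_of_int n\<bar>"
    and h: "h = (\<lambda>n::int. 2 / (k ^ 3 * (real_of_int n)\<^sup>2))"
    and small: "A * infsum h (- I) \<le> 1 / 2"
  shows "l2norm f \<le> 2 * (\<Sum>n\<in>I. \<bar>real_of_int n\<bar>) * l2norm (dzinv f) + 2 * infsum h (- I) * l2norm T"
proof -
  have f1: "(\<lambda>n. norm (f n)) summable_on UNIV" by (rule Hs0_summable_norm[OF s f])
  have "(\<lambda>n. 2 / k ^ 3 * (1 / (real_of_int n)\<^sup>2)) summable_on (- I)"
    by (rule summable_on_subset[OF summable_on_cmult_right[OF summable_on_inverse_power2_int]]) simp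
  then have h_summable: "h summable_on (- I)" unfolding h by simp
  have "norm (f n) \<le> \<bar>real_of_int n\<bar> * l2norm (dzinv f)" for n
    using dz_dzinv[of f, OF Hs0_zero[OF f]] norm_le_l2norm[OF Hs0_summable_norm2[OF dzinv_in_Hs0[OF f]], of n]
    by (metis norm_dz abs_ge_zero mult_left_mono)
  moreover have "norm (f n) \<le> (l2norm T + A * l1norm f) * h n" if "n \<notin> I" for n
  proof -
    have "norm (f n) \<le> (norm (T n) + A * l1norm f) * h n"
      unfolding h T(1) using large[OF that] lower
      by (intro Hop_high_frequency_bound[OF k]) auto
    also have "\<dots> \<le> (l2norm T + A * l1norm f) * h n"
      using norm_le_l2norm[of T n] T(2) k unfolding h
      by (intro mult_right_mono) (simp_all add: L2_0_def)
    finally show ?thesis .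
  qed
  ultimately have "l1norm f \<le> 2 * (\<Sum>n\<in>I. \<bar>real_of_int n\<bar> * l2norm (dzinv f)) + 2 * infsum h (- I) * l2norm T"
    using k small h_summable f1 I unfolding h
    by (intro l1norm_absorb[where A = A]) auto
  then show ?thesis
    using l2norm_le_l1norm[OF Hs0_summable_norm2[OF f] f1] by (simp add: sum_distrib_right[symmetric])
qed

lemma Hop_elliptic_estimate:
  fixes \<mu> :: complex
  assumes k: "k > 0" and s: "1 \<le> s"
    and w: "continuous_on {0..2*pi} w" "continuous_on {0..2*pi} (deriv w)"
  shows "\<exists>K1 K2. K1 \<ge> 0 \<and> (\<forall>f\<in>Hs0 s. (\<lambda>n. \<mu> * f n - Hop k \<rho> \<phi> w c \<gamma> f n) \<in> L2_0 \<longrightarrow>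
           l2norm f \<le> K1 * l2norm (dzinv f) + K2 * l2norm (\<lambda>n. \<mu> * f n - Hop k \<rho> \<phi> w c \<gamma> f n))"
proof -
  obtain A where A: "A \<ge> 0" and lower: "\<And>f n. (\<lambda>m. norm (f m)) summable_on UNIV \<Longrightarrow> n \<noteq> 0 \<Longrightarrow>
      norm (Hop_lower_order k \<rho> \<phi> w \<gamma> f n) \<le> \<bar>real_of_int n\<bar> * (A * l1norm f)"
    using Hop_lower_order_bound[OF w] by blast
  define h where "h = (\<lambda>n::int. 2 / (k ^ 3 * (real_of_int n)\<^sup>2))"
  have h: "h summable_on UNIV" "\<And>n. h n \<ge> 0"
    using summable_on_cmult_right[OF summable_on_inverse_power2_int, of "2 / k ^ 3"] k
    by (simp_all add: h_def)
  have "1 / (2 * (A + 1)) > 0" using A by simp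
  then obtain I where I: "finite I" and tail: "infsum h (- I) \<le> 1 / (2 * (A + 1))"
    and beyond: "\<And>n. n \<notin> I \<Longrightarrow> max 1 (2 * (\<bar>c\<bar> + norm \<mu> / k) / k\<^sup>2) \<le> \<bar>real_of_int n\<bar>"
    using summable_int_small_tail[OF h] by blast
  have "A * infsum h (- I) \<le> A * (1 / (2 * (A + 1)))" using tail A by (rule mult_left_mono)
  also have "\<dots> \<le> 1 / 2" using A by (simp add: field_simps)
  finally have small: "A * infsum h (- I) \<le> 1 / 2" .
  have large: "1 \<le> \<bar>real_of_int n\<bar> \<and> 2 * (\<bar>c\<bar> + norm \<mu> / k) \<le> k\<^sup>2 * \<bar>real_of_int n\<bar>"
    if "n \<notin> I" for n
    using beyond[OF that] k by (simp add: pos_divide_le_eq mult.commute)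
  have "l2norm f \<le> 2 * (\<Sum>n\<in>I. \<bar>real_of_int n\<bar>) * l2norm (dzinv f)
      + 2 * infsum h (- I) * l2norm (\<lambda>n. \<mu> * f n - Hop k \<rho> \<phi> w c \<gamma> f n)"
    if "f \<in> Hs0 s" "(\<lambda>n. \<mu> * f n - Hop k \<rho> \<phi> w c \<gamma> f n) \<in> L2_0" for f
    using Hop_l2norm_le_cutoff[OF k s that(1) refl that(2) lower[OF Hs0_summable_norm[OF s that(1)]]
        I large h_def small] .
  moreover have "0 \<le> 2 * (\<Sum>n\<in>I. \<bar>real_of_int n\<bar>)" by (simp add: sum_nonneg)
  ultimately show ?thesis by blast
qed

section \<open>Invertibility of Q versus mu - H\<close>

lemma Qop_eq_scaled_Hop_dz:
  assumes "k \<noteq> 0" "g 0 = 0"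
  shows "Qop k \<rho> \<phi> w c \<mu> \<gamma> g = (\<lambda>n. of_real k * (\<mu> * dz g n - Hop k \<rho> \<phi> w c \<gamma> (dz g) n))"
proof
  fix n :: int
  show "Qop k \<rho> \<phi> w c \<mu> \<gamma> g n = of_real k * (\<mu> * dz g n - Hop k \<rho> \<phi> w c \<gamma> (dz g) n)"
    using assms unfolding Qop_def Hop_def P0_def dzinv_dz[of g, OF assms(2)]
    by (cases "n = 0") (simp_all add: dz_def field_simps)
qed

lemma bij_betw_scale_comp_iff:
  assumes "r \<noteq> 0"
  shows "bij_betw (\<lambda>x n. complex_of_real r * g x n) A L2_0 \<longleftrightarrow> bij_betw g A L2_0"
proof
  assume "bij_betw (\<lambda>x n. complex_of_real r * g x n) A L2_0"
  from bij_betw_trans[OF this bij_betw_scale_L2_0[of "1 / r"]] assms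
  show "bij_betw g A L2_0" by (simp add: o_def)
next
  assume "bij_betw g A L2_0"
  from bij_betw_trans[OF this bij_betw_scale_L2_0[OF assms]]
  show "bij_betw (\<lambda>x n. complex_of_real r * g x n) A L2_0" by (simp add: o_def)
qed

lemma bij_betw_scaled_comp_dz_iff:
  assumes k: "k \<noteq> 0"
    and Q: "\<And>g. g \<in> Hs0 (Suc s) \<Longrightarrow> Q g = (\<lambda>n. complex_of_real k * T (dz g) n)"
  shows "bij_betw Q (Hs0 (Suc s)) L2_0 \<longleftrightarrow> bij_betw T (Hs0 s) L2_0"
proof -
  have "bij_betw Q (Hs0 (Suc s)) L2_0
      \<longleftrightarrow> bij_betw (\<lambda>g n. complex_of_real k * T (dz g) n) (Hs0 (Suc s)) L2_0"
    using Q by (rule bij_betw_cong)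
  also have "\<dots> \<longleftrightarrow> bij_betw (T \<circ> dz) (Hs0 (Suc s)) L2_0"
    using bij_betw_scale_comp_iff[OF k, of "T \<circ> dz"] by (simp add: o_def)
  also have "\<dots> \<longleftrightarrow> bij_betw T (Hs0 s) L2_0"
    using bij_betw_comp_iff[OF bij_betw_dz] by blast
  finally show ?thesis .
qed

lemma invertible_op_scaled_comp_dz_iff:
  assumes k: "k \<noteq> 0"
    and Q: "\<And>g. g \<in> Hs0 (Suc s) \<Longrightarrow> Q g = (\<lambda>n. complex_of_real k * T (dz g) n)"
    and estimate: "\<exists>K1 K2. K1 \<ge> 0 \<and> (\<forall>f\<in>Hs0 s. T f \<in> L2_0 \<longrightarrow>
                      l2norm f \<le> K1 * l2norm (dzinv f) + K2 * l2norm (T f))"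
  shows "invertible_op (Hs0 (Suc s)) Q \<longleftrightarrow> invertible_op (Hs0 s) T"
proof -
  have bij: "bij_betw Q (Hs0 (Suc s)) L2_0 \<longleftrightarrow> bij_betw T (Hs0 s) L2_0"
    using k Q by (rule bij_betw_scaled_comp_dz_iff)
  have norm_Q: "l2norm (Q g) = \<bar>k\<bar> * l2norm (T (dz g))" if "g \<in> Hs0 (Suc s)" for g
    using Q[OF that] l2norm_scale by simp
  show ?thesis
    unfolding invertible_op_def
  proof (intro iffI conjI; elim conjE exE)
    fix C assume bij_Q: "bij_betw Q (Hs0 (Suc s)) L2_0"
      and C: "\<forall>g\<in>Hs0 (Suc s). l2norm g \<le> C * l2norm (Q g)"
    show bij_T: "bij_betw T (Hs0 s) L2_0" using bij bij_Q by simp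
    obtain K1 K2 where K1: "K1 \<ge> 0"
      and K: "\<And>f. f \<in> Hs0 s \<Longrightarrow> T f \<in> L2_0 \<Longrightarrow> l2norm f \<le> K1 * l2norm (dzinv f) + K2 * l2norm (T f)"
      using estimate by blast
    have "l2norm f \<le> (K1 * C * \<bar>k\<bar> + K2) * l2norm (T f)" if f: "f \<in> Hs0 s" for f
    proof -
      have "l2norm (dzinv f) \<le> C * l2norm (Q (dzinv f))" using C dzinv_in_Hs0[OF f] by blast
      also have "\<dots> = C * (\<bar>k\<bar> * l2norm (T f))"
        using norm_Q[OF dzinv_in_Hs0[OF f]] dz_dzinv[of f, OF Hs0_zero[OF f]] by simp
      finally have "K1 * l2norm (dzinv f) \<le> K1 * (C * (\<bar>k\<bar> * l2norm (T f)))"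
        using K1 by (rule mult_left_mono)
      moreover have "T f \<in> L2_0" using bij_betw_apply[OF bij_T f] .
      ultimately show ?thesis using K[OF f] by (simp add: algebra_simps)
    qed
    then show "\<exists>C. \<forall>f\<in>Hs0 s. l2norm f \<le> C * l2norm (T f)" by blast
  next
    fix C assume bij_T: "bij_betw T (Hs0 s) L2_0"
      and C: "\<forall>f\<in>Hs0 s. l2norm f \<le> C * l2norm (T f)"
    show "bij_betw Q (Hs0 (Suc s)) L2_0" using bij bij_T by simp
    have "l2norm g \<le> C / \<bar>k\<bar> * l2norm (Q g)" if g: "g \<in> Hs0 (Suc s)" for g
    proof -
      have "l2norm g \<le> l2norm (dz g)" by (rule l2norm_le_l2norm_dz[OF g])
      also have "\<dots> \<le> C * l2norm (T (dz g))" using C dz_in_Hs0[OF g] by blast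
      also have "\<dots> = C / \<bar>k\<bar> * l2norm (Q g)" using norm_Q[OF g] k by simp
      finally show ?thesis .
    qed
    then show "\<exists>C. \<forall>g\<in>Hs0 (Suc s). l2norm g \<le> C * l2norm (Q g)" by blast
  qed
qed

theorem lemma2p1:
  fixes \<rho> \<phi> k \<gamma> :: real
    and w :: "real \<Rightarrow> real \<Rightarrow> real"   (* w a z : the wave profile of amplitude a *)
    and c :: "real \<Rightarrow> real"            (* c a : the wave speed *)
  assumes k_pos: "k > 0"
    and w_smooth: "\<And>a m z. ((deriv ^^ m) (w a)) differentiable (at z)"
    and w_even: "\<And>a z. w a (- z) = w a z"
    and w_periodic: "\<And>a z. w a (z + 2 * pi) = w a z"
    and w_expansion: "\<exists>C. \<forall>a z. \<bar>a\<bar> \<le> 1 \<longrightarrow>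
          \<bar>w a z - (a * cos z + a\<^sup>2 * (- 3 * \<rho> / (2 * k\<^sup>2) + \<rho> / (2 * k\<^sup>2) * cos (2 * z))
                     + a ^ 3 * (- \<phi>\<^sup>2 / (64 * k\<^sup>2) + 3 * \<rho>\<^sup>2 / (16 * k ^ 4)) * cos (3 * z))\<bar>
            \<le> C * a ^ 4"
    and c_expansion: "\<exists>C. \<forall>a. \<bar>a\<bar> \<le> 1 \<longrightarrow>
          \<bar>c a - (k\<^sup>2 + a\<^sup>2 * (3 * \<phi>\<^sup>2 / 8 + 15 * \<rho>\<^sup>2 / (2 * k\<^sup>2)))\<bar> \<le> C * a ^ 4"
  shows "\<exists>a0 > 0. \<forall>a. \<bar>a\<bar> < a0 \<longrightarrow> (\<forall>\<mu> :: complex.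
           (\<not> invertible_op (Hs0 4) (Qop k \<rho> \<phi> (w a) (c a) \<mu> \<gamma>))
           \<longleftrightarrow> \<mu> \<in> op_spectrum (Hs0 3) (Hop k \<rho> \<phi> (w a) (c a) \<gamma>))"
proof (intro exI[of _ 1] conjI allI impI)
  fix a :: real and \<mu> :: complex
  have "continuous_on {0..2*pi} (w a)" "continuous_on {0..2*pi} (deriv (w a))"
    using w_smooth[where a = a and m = 0] w_smooth[where a = a and m = 1]
    by (auto intro!: differentiable_imp_continuous_on differentiable_at_imp_differentiable_on)
  then have "\<exists>K1 K2. K1 \<ge> 0 \<and> (\<forall>f\<in>Hs0 3. (\<lambda>n. \<mu> * f n - Hop k \<rho> \<phi> (w a) (c a) \<gamma> f n) \<in> L2_0 \<longrightarrow>
      l2norm f \<le> K1 * l2norm (dzinv f) + K2 * l2norm (\<lambda>n. \<mu> * f n - Hop k \<rho> \<phi> (w a) (c a) \<gamma> f n))"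
    using k_pos by (intro Hop_elliptic_estimate) simp_all
  moreover have "Qop k \<rho> \<phi> (w a) (c a) \<mu> \<gamma> g
      = (\<lambda>n. of_real k * (\<mu> * dz g n - Hop k \<rho> \<phi> (w a) (c a) \<gamma> (dz g) n))"
    if "g \<in> Hs0 (Suc 3)" for g
    using k_pos Hs0_zero[OF that] by (intro Qop_eq_scaled_Hop_dz) simp_all
  ultimately have "invertible_op (Hs0 (Suc 3)) (Qop k \<rho> \<phi> (w a) (c a) \<mu> \<gamma>)
      \<longleftrightarrow> invertible_op (Hs0 3) (\<lambda>f n. \<mu> * f n - Hop k \<rho> \<phi> (w a) (c a) \<gamma> f n)"
    using k_pos by (intro invertible_op_scaled_comp_dz_iff) simp_all
  then show "(\<not> invertible_op (Hs0 4) (Qop k \<rho> \<phi> (w a) (c a) \<mu> \<gamma>))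
      \<longleftrightarrow> \<mu> \<in> op_spectrum (Hs0 3) (Hop k \<rho> \<phi> (w a) (c a) \<gamma>)"
    by (simp add: op_spectrum_def numeral_eq_Suc)
qed simp

end
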